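(* Let $n$ be odd and let $q\ge 4$ be even. For every $w\in\mathbb{Z}_q^n$ there exists an ordering $G(0),G(1),\ldots,G(q^n-q-1)$ of the set $\mathbb{Z}_q^n\setminus\{w+(i,i,\ldots,i): 0\le i<q\}$ such that $G(j)$ and $G(j+1)$ are at Lee distance $1$ for all $0\le j<q^n-q-1$, and $G((j+q^{n-1}-1)\bmod (q^n-q)) = G(j)+(1,1,\ldots,1)$ for all $j$ (addition of words in $\mathbb{Z}_q^n$).
   Context: The Lee distance between $v=(v_1,\ldots,v_n)$ and $u=(u_1,\ldots,u_n)$ in $\mathbb{Z}_q^n$ is $\sum_{i=1}^n \min\{|v_i-u_i|,\,q-|v_i-u_i|\}$, where $v_i,u_i$ are regarded as integers in $\{0,\ldots,q-1\}$. (Such an ordering is a quasi-complementary Lee metric Gray code of $q$-ary $n$-tuples missing the $q$ words $w+(i,\ldots,i)$.) *)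

theory Defs
  imports Main
begin

text \<open>Words of Z_q^n are represented as functions nat => nat with
  entries in {0..<q} at positions < n and 0 at positions >= n.\<close>

definition words :: "nat \<Rightarrow> nat \<Rightarrow> (nat \<Rightarrow> nat) set" where
  "words q n = {v. (\<forall>k<n. v k < q) \<and> (\<forall>k\<ge>n. v k = 0)}"

definition word_add :: "nat \<Rightarrow> nat \<Rightarrow> (nat \<Rightarrow> nat) \<Rightarrow> (nat \<Rightarrow> nat) \<Rightarrow> (nat \<Rightarrow> nat)" where
  "word_add q n u v = (\<lambda>k. if k < n then (u k + v k) mod q else 0)"

definition const_word :: "nat \<Rightarrow> nat \<Rightarrow> (nat \<Rightarrow> nat)" where
  "const_word n i = (\<lambda>k. if k < n then i else 0)"

definition lee_dist :: "nat \<Rightarrow> nat \<Rightarrow> (nat \<Rightarrow> nat) \<Rightarrow> (nat \<Rightarrow> nat) \<Rightarrow> nat" where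
  "lee_dist q n v u =
     (\<Sum>k<n. let d = nat \<bar>int (v k) - int (u k)\<bar> in min d (q - d))"

end

theory Submission
  imports Defs "HOL-Library.FuncSet" "HOL-Number_Theory.Cong"
begin

text \<open>Let \<open>D\<close> be the diagonal \<open>{(i, ..., i)}\<close> and \<open>M = q ^ (n - 1) - 1\<close>. If the words
  \<open>R 0, ..., R (M - 1)\<close> lie in the \<open>M\<close> cosets of \<open>D\<close> other than \<open>D\<close>, one in each, with
  consecutive words at Lee distance 1 and \<open>R (M - 1)\<close> at distance 1 from \<open>R 0 + (1, ..., 1)\<close>,
  then \<open>G (a * M + i) = R i + (a, ..., a)\<close> is the required ordering, and
  \<open>G (j + M) = G j + (1, ..., 1)\<close> holds by construction.

  Such paths are built by induction from \<open>n\<close> to \<open>n + 2\<close>, keeping \<open>G 0\<close> at distance 1 from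
  the zero word. The cosets of \<open>Z_q^(n+2)\<close> other than \<open>D\<close> are represented by the words
  \<open>(0, ..., 0, a, b)\<close> with \<open>(a, b) \<noteq> (0, 0)\<close> and by the words \<open>(G L, c, 1)\<close>. The former are
  traversed by a boustrophedon of the \<open>q \<times> q\<close> grid ending at \<open>(0, 1)\<close>, the latter by a
  Hamiltonian path of the grid of pairs \<open>(L, c)\<close> from \<open>(0, 0)\<close> to \<open>(M, 0)\<close>, whose steps in
  \<open>L\<close> are steps of \<open>G\<close>; such a path exists because \<open>M\<close> is odd for odd \<open>n\<close>. The shift
  \<open>G M = G 0 + (1, ..., 1)\<close> closes the new path. Translating by \<open>w\<close> moves the missing coset.\<close>

section \<open>Lee distance and the diagonal\<close>

definition lee_coord :: "nat \<Rightarrow> nat \<Rightarrow> nat \<Rightarrow> nat" where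
  "lee_coord q a b = min (a - b + (b - a)) (q - (a - b + (b - a)))"

lemma lee_dist_eq_sum: "lee_dist q n u v = (\<Sum>k<n. lee_coord q (u k) (v k))"
proof -
  have "nat \<bar>int a - int b\<bar> = a - b + (b - a)" for a b :: nat
    by linarith
  then show ?thesis
    by (simp add: lee_dist_def lee_coord_def Let_def)
qed

lemma lee_coord_self [simp]: "lee_coord q a a = 0"
  by (simp add: lee_coord_def)

lemma lee_coord_commute: "lee_coord q a b = lee_coord q b a"
  by (simp add: lee_coord_def add.commute)

lemma lee_coord_Suc [simp]:
  assumes "2 \<le> q"
  shows "lee_coord q a (Suc a) = 1" and "lee_coord q (Suc a) a = 1"
  using assms by (simp_all add: lee_coord_def)

lemma lee_coord_wrap: "2 \<le> q \<Longrightarrow> lee_coord q (q - 1) 0 = 1"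
  by (simp add: lee_coord_def)

lemma lee_coord_add_mod_less:
  assumes "a < q" "b < q" "c < q"
  shows "lee_coord q ((a + c) mod q) ((b + c) mod q) = lee_coord q a b"
proof -
  have "(a + c) mod q = (if a + c < q then a + c else a + c - q)"
    "(b + c) mod q = (if b + c < q then b + c else b + c - q)"
    using assms by (simp_all add: mod_if)
  then show ?thesis
    using assms unfolding lee_coord_def by (simp split: if_splits)
qed

lemma lee_coord_add_mod:
  assumes "a < q" "b < q"
  shows "lee_coord q ((a + c) mod q) ((b + c) mod q) = lee_coord q a b"
  using lee_coord_add_mod_less[OF assms, of "c mod q"] assms
  by (simp add: mod_add_right_eq)

lemma mod_add_right_cancel:
  fixes a b c q :: nat
  assumes "a < q" "b < q" "(a + c) mod q = (b + c) mod q"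
  shows "a = b"
  using assms cong_add_rcancel_nat[of a c b q] by (simp add: cong_def)

lemma word_add_in_words: "0 < q \<Longrightarrow> word_add q n u v \<in> words q n"
  by (simp add: words_def word_add_def)

lemma const_word_in_words: "i < q \<Longrightarrow> const_word n i \<in> words q n"
  by (simp add: words_def const_word_def)

lemma word_add_commute: "word_add q n u v = word_add q n v u"
  by (simp add: word_add_def fun_eq_iff add.commute)

lemma word_add_assoc:
  "word_add q n (word_add q n u v) x = word_add q n u (word_add q n v x)"
  by (simp add: word_add_def fun_eq_iff mod_add_left_eq mod_add_right_eq add.assoc)

lemma word_add_zero:
  "v \<in> words q n \<Longrightarrow> word_add q n v (\<lambda>_. 0) = v"
  by (auto simp: word_add_def words_def)

lemma word_add_const_const:
  "word_add q n (word_add q n v (const_word n a)) (const_word n b) =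
   word_add q n v (const_word n (a + b))"
  by (auto simp: word_add_def const_word_def mod_add_left_eq add.assoc)

lemma word_add_const_mod:
  "word_add q n v (const_word n (a mod q)) = word_add q n v (const_word n a)"
  by (auto simp: word_add_def const_word_def mod_add_right_eq)

lemma word_add_zero_left:
  "v \<in> words q n \<Longrightarrow> word_add q n (\<lambda>_. 0) v = v"
  by (simp add: word_add_commute word_add_zero)

lemma word_add_const_0:
  "v \<in> words q n \<Longrightarrow> word_add q n v (const_word n 0) = v"
  by (auto simp: word_add_def const_word_def words_def)

lemma word_add_const_q:
  "v \<in> words q n \<Longrightarrow> word_add q n v (const_word n q) = v"
  using word_add_const_mod[of q n v q] by (simp add: word_add_const_0)

lemma const_word_add_const_word:
  "word_add q n (const_word n a) (const_word n b) = const_word n ((a + b) mod q)"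
  by (simp add: word_add_def const_word_def fun_eq_iff)

lemma word_add_right_cancel:
  assumes "u \<in> words q n" "v \<in> words q n" "word_add q n u x = word_add q n v x"
  shows "u = v"
proof
  fix k
  show "u k = v k"
  proof (cases "k < n")
    case True
    then have "(u k + x k) mod q = (v k + x k) mod q"
      using fun_cong[OF assms(3), of k] by (simp add: word_add_def)
    with True assms(1,2) show ?thesis
      by (auto simp: words_def intro: mod_add_right_cancel)
  qed (use assms in \<open>simp add: words_def\<close>)
qed

lemma lee_dist_self [simp]: "lee_dist q n u u = 0"
  by (simp add: lee_dist_eq_sum)

lemma lee_dist_commute: "lee_dist q n u v = lee_dist q n v u"
  by (simp add: lee_dist_eq_sum lee_coord_commute)

lemma lee_dist_word_add:
  assumes "u \<in> words q n" "v \<in> words q n"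
  shows "lee_dist q n (word_add q n u x) (word_add q n v x) = lee_dist q n u v"
  unfolding lee_dist_eq_sum
  by (rule sum.cong) (use assms in \<open>auto simp: word_add_def words_def lee_coord_add_mod\<close>)

lemma words_eq_image_PiE:
  "words q n = (\<lambda>f k. if k < n then f k else 0) ` PiE {..<n} (\<lambda>_. {..<q})"
proof (intro set_eqI iffI)
  fix v assume v: "v \<in> words q n"
  then have "v = (\<lambda>k. if k < n then restrict v {..<n} k else 0)"
    by (auto simp: words_def)
  moreover have "restrict v {..<n} \<in> PiE {..<n} (\<lambda>_. {..<q})"
    using v by (auto simp: words_def)
  ultimately show "v \<in> (\<lambda>f k. if k < n then f k else 0) ` PiE {..<n} (\<lambda>_. {..<q})"
    by blast
qed (auto simp: words_def PiE_def Pi_def)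

lemma finite_words: "finite (words q n)"
  by (simp add: words_eq_image_PiE finite_PiE)

lemma card_words: "card (words q n) = q ^ n"
proof -
  have "inj_on (\<lambda>f k. if k < n then f k else 0) (PiE {..<n} (\<lambda>_. {..<q}))"
  proof (rule inj_onI)
    fix f g
    assume f: "f \<in> PiE {..<n} (\<lambda>_. {..<q})" and g: "g \<in> PiE {..<n} (\<lambda>_. {..<q})"
      and eq: "(\<lambda>k. if k < n then f k else 0) = (\<lambda>k. if k < n then g k else 0)"
    show "f = g"
    proof (rule PiE_ext[OF f g])
      fix k
      assume "k \<in> {..<n}"
      then show "f k = g k"
        using fun_cong[OF eq, of k] by simp
    qed
  qed
  then show ?thesis
    by (simp add: words_eq_image_PiE card_image card_PiE)
qed

definition diag :: "nat \<Rightarrow> nat \<Rightarrow> (nat \<Rightarrow> nat) set" where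
  "diag q n = const_word n ` {..<q}"

lemma diag_subset_words: "diag q n \<subseteq> words q n"
  by (auto simp: diag_def const_word_in_words)

lemma const_word_inj: "0 < n \<Longrightarrow> const_word n a = const_word n b \<Longrightarrow> a = b"
  by (metis const_word_def)

lemma card_diag: "0 < n \<Longrightarrow> card (diag q n) = q"
  unfolding diag_def by (metis card_image card_lessThan const_word_inj inj_onI)

lemma card_words_diff_diag: "0 < n \<Longrightarrow> card (words q n - diag q n) = q ^ n - q"
  by (simp add: card_Diff_subset diag_subset_words card_words card_diag
      finite_subset[OF diag_subset_words finite_words])

lemma word_add_const_in_diag:
  assumes "v \<in> words q n" "word_add q n v (const_word n r) \<in> diag q n"
  shows "v \<in> diag q n"
proof -
  obtain c where c: "c < q" "word_add q n v (const_word n r) = const_word n c"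
    using assms(2) by (auto simp: diag_def)
  have "v = word_add q n v (const_word n (q mod q))"
    by (simp add: word_add_const_0[OF assms(1)])
  also have "\<dots> = word_add q n v (const_word n (r mod q + (q - r mod q)))"
    using c(1) word_add_const_mod[of q n v q] by simp
  also have "\<dots> = const_word n ((c + (q - r mod q)) mod q)"
    by (simp only: word_add_const_mod word_add_const_const[symmetric] c(2)
        const_word_add_const_word)
  finally have "v = const_word n ((c + (q - r mod q)) mod q)" .
  moreover have "(c + (q - r mod q)) mod q < q"
    using c(1) by simp
  ultimately show ?thesis
    unfolding diag_def by (metis lessThan_iff rev_image_eqI)
qed

definition diag_coset :: "nat \<Rightarrow> nat \<Rightarrow> (nat \<Rightarrow> nat) \<Rightarrow> (nat \<Rightarrow> nat) set" where
  "diag_coset q n w = (\<lambda>i. word_add q n w (const_word n i)) ` {..<q}"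

lemma diag_coset_zero: "diag_coset q n (\<lambda>_. 0) = diag q n"
  unfolding diag_coset_def diag_def
  by (rule image_cong) (simp_all add: word_add_def const_word_def fun_eq_iff)

section \<open>Lifting a path through the cosets of the diagonal\<close>

definition quasi_complementary_gray ::
    "nat \<Rightarrow> nat \<Rightarrow> (nat \<Rightarrow> nat) \<Rightarrow> (nat \<Rightarrow> nat \<Rightarrow> nat) \<Rightarrow> bool" where
  "quasi_complementary_gray q n w G \<longleftrightarrow>
     bij_betw G {0..<q ^ n - q} (words q n - diag_coset q n w) \<and>
     (\<forall>j. j + 1 < q ^ n - q \<longrightarrow> lee_dist q n (G j) (G (j + 1)) = 1) \<and>
     (\<forall>j < q ^ n - q.
        G ((j + q ^ (n - 1) - 1) mod (q ^ n - q)) = word_add q n (G j) (const_word n 1))"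

lemma quasi_complementary_gray_translate:
  assumes "0 < q" "w \<in> words q n" and gray: "quasi_complementary_gray q n (\<lambda>_. 0) G"
  shows "quasi_complementary_gray q n w (word_add q n w \<circ> G)"
proof -
  let ?T = "word_add q n w"
  have inj: "inj_on ?T (words q n)"
    by (rule inj_onI) (metis word_add_commute word_add_right_cancel)
  have "?T ` words q n = words q n"
    using assms(1) by (intro endo_inj_surj finite_words inj) (auto simp: word_add_in_words)
  moreover have "?T ` diag q n = diag_coset q n w"
    by (simp add: diag_def diag_coset_def image_image)
  ultimately have T_bij: "bij_betw ?T (words q n - diag q n) (words q n - diag_coset q n w)"
    using inj_on_subset[OF inj Diff_subset]
      inj_on_image_set_diff[OF inj Diff_subset diag_subset_words]
    by (simp add: bij_betw_def)
  have G_bij: "bij_betw G {0..<q ^ n - q} (words q n - diag q n)"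
    using gray by (simp add: quasi_complementary_gray_def diag_coset_zero)
  then have G_words: "j < q ^ n - q \<Longrightarrow> G j \<in> words q n" for j
    by (auto dest: bij_betw_apply)
  have "lee_dist q n (?T (G j)) (?T (G (j + 1))) = lee_dist q n (G j) (G (j + 1))"
    if "j + 1 < q ^ n - q" for j
    using that G_words lee_dist_word_add[of "G j" q n "G (j + 1)" w]
    by (simp add: word_add_commute)
  moreover have "?T (word_add q n (G j) (const_word n 1)) = word_add q n (?T (G j)) (const_word n 1)"
    for j
    by (simp add: word_add_assoc)
  ultimately show ?thesis
    using gray bij_betw_trans[OF G_bij T_bij] by (simp add: quasi_complementary_gray_def)
qed

lemma power_minus_eq_mult:
  fixes q n :: nat
  assumes "0 < n"
  shows "q ^ n - q = q * (q ^ (n - 1) - 1)"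
proof -
  have "q ^ n = q * q ^ (n - 1)"
    using assms by (simp add: power_eq_if)
  then show ?thesis
    by (simp add: diff_mult_distrib2)
qed

text \<open>By \<open>inj_R\<close> and \<open>R_add_const_eq\<close> the words \<open>R i\<close> lie in pairwise distinct cosets of
  the diagonal; since \<open>q * M = q ^ n - q\<close>, these are all cosets except the diagonal itself.\<close>

locale diag_transversal =
  fixes q n M :: nat and R :: "nat \<Rightarrow> nat \<Rightarrow> nat"
  assumes q_pos: "0 < q" and n_pos: "0 < n" and M_eq: "M = q ^ (n - 1) - 1"
    and R_mem: "\<And>i. i < M \<Longrightarrow> R i \<in> words q n - diag q n"
    and inj_R: "inj_on R {..<M}"
    and R_add_const_eq:
      "\<And>i i' r. i < M \<Longrightarrow> i' < M \<Longrightarrow> r < q \<Longrightarrow>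
         word_add q n (R i) (const_word n r) = R i' \<Longrightarrow> r = 0"
    and R_step: "\<And>i. Suc i < M \<Longrightarrow> lee_dist q n (R i) (R (Suc i)) = 1"
    and R_close: "0 < M \<Longrightarrow> lee_dist q n (R (M - 1)) (word_add q n (R 0) (const_word n 1)) = 1"
begin

definition gray :: "nat \<Rightarrow> nat \<Rightarrow> nat" where
  "gray j = word_add q n (R (j mod M)) (const_word n (j div M))"

lemma length_eq: "q ^ n - q = q * M"
  using n_pos by (simp add: M_eq power_minus_eq_mult)

lemma index_bounds:
  assumes "j < q * M"
  shows "0 < M" "j mod M < M" "j div M < q"
proof -
  show "0 < M"
    using assms by (cases M) auto
  then show "j mod M < M"
    by simp
  show "j div M < q"
    using assms by (simp add: less_mult_imp_div_less mult.commute)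
qed

lemma gray_mem: "j < q * M \<Longrightarrow> gray j \<in> words q n - diag q n"
  using R_mem[of "j mod M"] index_bounds[of j] q_pos
  by (auto simp: gray_def word_add_in_words dest: word_add_const_in_diag)

lemma R_add_const_cancel:
  assumes "i < M" "i' < M" "a < q" "a' < q"
    and eq: "word_add q n (R i) (const_word n a) = word_add q n (R i') (const_word n a')"
  shows "i = i' \<and> a = a'"
proof -
  have R_i: "R i \<in> words q n" "R i' \<in> words q n"
    using R_mem assms by auto
  have "word_add q n (R i) (const_word n ((a + (q - a')) mod q))
      = word_add q n (word_add q n (R i) (const_word n a)) (const_word n (q - a'))"
    by (simp add: word_add_const_mod word_add_const_const)
  also have "\<dots> = word_add q n (R i') (const_word n q)"
    using eq assms by (simp add: word_add_const_const)
  also have "\<dots> = R i'"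
    using R_i by (simp add: word_add_const_q)
  finally have shifted: "word_add q n (R i) (const_word n ((a + (q - a')) mod q)) = R i'" .
  then have "(a + (q - a')) mod q = 0"
    using R_add_const_eq assms q_pos by simp
  with shifted have "R i = R i'"
    using R_i by (simp add: word_add_const_0)
  then have "i = i'"
    using inj_R assms by (auto dest: inj_onD)
  moreover have "a = a'"
  proof -
    have "(a + R i 0) mod q = (a' + R i 0) mod q"
      using fun_cong[OF eq, of 0] n_pos \<open>i = i'\<close>
      by (simp add: word_add_def const_word_def add.commute)
    then show ?thesis
      using assms by (blast intro: mod_add_right_cancel)
  qed
  ultimately show ?thesis ..
qed

lemma inj_on_gray: "inj_on gray {..<q * M}"
proof (rule inj_onI)
  fix j j'
  assume "j \<in> {..<q * M}" "j' \<in> {..<q * M}" and "gray j = gray j'"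
  then have "j mod M = j' mod M \<and> j div M = j' div M"
    using index_bounds by (intro R_add_const_cancel) (auto simp: gray_def)
  then show "j = j'"
    by (metis div_mult_mod_eq)
qed

lemma bij_gray: "bij_betw gray {0..<q ^ n - q} (words q n - diag q n)"
proof -
  have "gray ` {..<q * M} = words q n - diag q n"
    using gray_mem n_pos
    by (intro card_subset_eq) (auto simp: finite_words card_image inj_on_gray
        card_words_diff_diag length_eq)
  then show ?thesis
    by (simp add: bij_betw_def inj_on_gray length_eq atLeast0LessThan)
qed

lemma gray_step:
  assumes "j + 1 < q * M"
  shows "lee_dist q n (gray j) (gray (j + 1)) = 1"
proof -
  have bounds: "0 < M" "j mod M < M" "j div M < q"
    using assms index_bounds[of j] by auto
  show ?thesis
  proof (cases "Suc (j mod M) = M")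
    case False
    then have "(j + 1) mod M = Suc (j mod M)" "(j + 1) div M = j div M"
      by (simp_all add: mod_Suc div_Suc)
    moreover have "Suc (j mod M) < M"
      using False bounds by linarith
    ultimately show ?thesis
      using R_step R_mem bounds
      by (simp add: gray_def lee_dist_word_add)
  next
    case True
    then have "j mod M = M - 1" "(j + 1) mod M = 0" "(j + 1) div M = Suc (j div M)"
      by (simp_all add: mod_Suc div_Suc)
    moreover have "gray (j + 1) =
        word_add q n (word_add q n (R 0) (const_word n 1)) (const_word n (j div M))"
      using calculation by (simp add: gray_def word_add_const_const)
    ultimately show ?thesis
      using R_close R_mem bounds q_pos
      by (simp add: gray_def lee_dist_word_add word_add_in_words)
  qed
qed

lemma gray_mod: "gray (j mod (q * M)) = gray j"
proof (cases "M = 0")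
  case False
  have "j mod (q * M) = M * (j div M mod q) + j mod M"
    by (simp add: mod_mult2_eq mult.commute)
  then have "j mod (q * M) mod M = j mod M" "j mod (q * M) div M = j div M mod q"
    using False by simp_all
  then show ?thesis
    by (simp add: gray_def word_add_const_mod)
qed simp

lemma gray_shift:
  assumes "j < q ^ n - q"
  shows "gray ((j + q ^ (n - 1) - 1) mod (q ^ n - q)) = word_add q n (gray j) (const_word n 1)"
proof -
  have "0 < M"
    using assms index_bounds by (simp add: length_eq)
  have "j + q ^ (n - 1) - 1 = j + M"
    using q_pos by (simp add: M_eq)
  then have "gray ((j + q ^ (n - 1) - 1) mod (q ^ n - q)) = gray (j + M)"
    by (simp add: length_eq gray_mod)
  also have "\<dots> = word_add q n (gray j) (const_word n 1)"
    using \<open>0 < M\<close> by (simp add: gray_def word_add_const_const div_add_self2)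
  finally show ?thesis .
qed

theorem quasi_complementary_gray: "quasi_complementary_gray q n (\<lambda>_. 0) gray"
  using bij_gray gray_step gray_shift
  by (simp add: quasi_complementary_gray_def diag_coset_zero length_eq)

end

section \<open>Hamiltonian paths in grids\<close>

definition grid_adj :: "nat \<times> nat \<Rightarrow> nat \<times> nat \<Rightarrow> bool" where
  "grid_adj x y \<longleftrightarrow>
     (fst x = fst y \<and> (snd y = Suc (snd x) \<or> snd x = Suc (snd y))) \<or>
     (snd x = snd y \<and> (fst y = Suc (fst x) \<or> fst x = Suc (fst y)))"

lemma grid_adj_commute: "grid_adj x y \<longleftrightarrow> grid_adj y x"
  by (auto simp: grid_adj_def)

lemma lee_coord_grid_adj:
  "2 \<le> q \<Longrightarrow> grid_adj x y \<Longrightarrow> lee_coord q (fst x) (fst y) + lee_coord q (snd x) (snd y) = 1"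
  by (auto simp: grid_adj_def)

definition snake :: "nat \<Rightarrow> nat \<Rightarrow> nat \<times> nat" where
  "snake h p = (p div h, if even (p div h) then p mod h else h - 1 - p mod h)"

lemma snake_grid_adj:
  assumes "0 < h"
  shows "grid_adj (snake h p) (snake h (Suc p))"
proof (cases "Suc (p mod h) = h")
  case True
  then have "Suc p mod h = 0" "Suc p div h = Suc (p div h)"
    by (simp_all add: mod_Suc div_Suc)
  with True show ?thesis
    by (auto simp: snake_def grid_adj_def)
next
  case False
  then have "Suc p mod h = Suc (p mod h)" "Suc p div h = p div h"
    by (simp_all add: mod_Suc div_Suc)
  moreover have "p mod h < h"
    using assms by simp
  ultimately show ?thesis
    using False by (auto simp: snake_def grid_adj_def)
qed

lemma snake_bounds:
  assumes "p < w * h"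
  shows "fst (snake h p) < w" "snd (snake h p) < h"
proof -
  have "0 < h"
    using assms by (cases h) auto
  then show "snd (snake h p) < h"
    by (simp add: snake_def)
  show "fst (snake h p) < w"
    using assms by (simp add: snake_def less_mult_imp_div_less)
qed

lemma inj_snake:
  assumes "0 < h"
  shows "inj (snake h)"
proof (rule injI)
  fix p p'
  assume eq: "snake h p = snake h p'"
  then have div: "p div h = p' div h"
    by (simp add: snake_def)
  have "p mod h = p' mod h"
  proof (cases "even (p div h)")
    case True
    with eq div show ?thesis
      by (simp add: snake_def)
  next
    case False
    with eq div have "h - 1 - p mod h = h - 1 - p' mod h"
      by (simp add: snake_def)
    moreover have "p mod h < h" "p' mod h < h"
      using assms by simp_all
    ultimately show ?thesis
      by linarith
  qed
  with div show "p = p'"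
    by (metis div_mult_mod_eq)
qed

lemma snake_0 [simp]: "snake h 0 = (0, 0)"
  by (simp add: snake_def)

lemma snake_1: "2 \<le> h \<Longrightarrow> snake h 1 = (0, 1)"
  by (simp add: snake_def)

lemma snake_last:
  assumes "0 < h" "0 < w"
  shows "snake h (w * h - 1) = (w - 1, if even (w - 1) then h - 1 else 0)"
proof -
  have split: "w * h - 1 = (h - 1) + (w - 1) * h"
    using assms by (cases w; cases h) (auto simp: algebra_simps)
  have "(w * h - 1) div h = w - 1" "(w * h - 1) mod h = h - 1"
    unfolding split using assms by (subst div_mult_self1 mod_mult_self1; simp)+
  then show ?thesis
    by (simp add: snake_def)
qed

text \<open>A Hamiltonian path of the grid \<open>{..<q * M} \<times> {..<q}\<close>: the columns below \<open>M\<close>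
  are swept column by column, the remaining ones row by row from the top row downwards.
  As \<open>M\<close> is odd and \<open>q\<close> even, the path runs from \<open>(0, 0)\<close> to \<open>(M, 0)\<close>.\<close>

definition grid_path :: "nat \<Rightarrow> nat \<Rightarrow> nat \<Rightarrow> nat \<times> nat" where
  "grid_path q M p =
     (if p < M * q then snake q p
      else (M + snd (snake (q * M - M) (p - M * q)), q - 1 - fst (snake (q * M - M) (p - M * q))))"

context
  fixes q M :: nat
  assumes q_ge_2: "2 \<le> q" and even_q: "even q" and odd_M: "odd M"
begin

private lemma M_pos: "0 < M"
  using odd_M by (cases M) auto

private lemma M_less: "M < q * M"
proof -
  have "1 * M < q * M"
    using M_pos q_ge_2 by (intro mult_strict_right_mono) auto
  then show ?thesis
    by simp
qed

private lemma row_phase_bound: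
  assumes "p < q * (q * M)" "\<not> p < M * q"
  shows "p - M * q < q * (q * M - M)"
proof -
  have "q * (q * M - M) = q * (q * M) - M * q"
    by (simp add: diff_mult_distrib2 mult.commute)
  with assms show ?thesis
    by linarith
qed

lemma grid_path_bounds:
  assumes "p < q * (q * M)"
  shows "fst (grid_path q M p) < q * M" "snd (grid_path q M p) < q"
proof -
  have "fst (grid_path q M p) < q * M \<and> snd (grid_path q M p) < q"
  proof (cases "p < M * q")
    case True
    then show ?thesis
      using snake_bounds[of p M q] less_trans[OF _ M_less] by (simp add: grid_path_def)
  next
    case False
    then show ?thesis
      using snake_bounds[OF row_phase_bound[OF assms False]] q_ge_2
      by (simp add: grid_path_def)
  qed
  then show "fst (grid_path q M p) < q * M" "snd (grid_path q M p) < q"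
    by simp_all
qed

lemma inj_on_grid_path: "inj_on (grid_path q M) {..<q * (q * M)}"
proof (rule inj_onI)
  fix p p'
  assume p: "p \<in> {..<q * (q * M)}" and p': "p' \<in> {..<q * (q * M)}"
    and eq: "grid_path q M p = grid_path q M p'"
  have column_phase: "fst (grid_path q M x) < M \<longleftrightarrow> x < M * q" for x
    using snake_bounds[of x M q] by (auto simp: grid_path_def)
  show "p = p'"
  proof (cases "p < M * q")
    case True
    then have "p' < M * q"
      using eq column_phase[of p] column_phase[of p'] by simp
    with True eq show ?thesis
      using inj_snake[of q] q_ge_2 by (simp add: grid_path_def inj_eq)
  next
    case False
    then have "\<not> p' < M * q"
      using eq column_phase[of p] column_phase[of p'] by simp
    define s s' where "s = snake (q * M - M) (p - M * q)" and "s' = snake (q * M - M) (p' - M * q)"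
    have "fst s < q" "fst s' < q"
      using snake_bounds(1)[OF row_phase_bound] p p' False \<open>\<not> p' < M * q\<close>
      by (simp_all add: s_def s'_def)
    moreover have "snd s = snd s'" "q - 1 - fst s = q - 1 - fst s'"
      using eq False \<open>\<not> p' < M * q\<close> by (simp_all add: grid_path_def s_def s'_def)
    ultimately have "s = s'"
      by (simp add: prod_eq_iff)
    then show ?thesis
      using False \<open>\<not> p' < M * q\<close> inj_snake[of "q * M - M"] M_less
      by (simp add: s_def s'_def inj_eq)
  qed
qed

lemma grid_path_0: "grid_path q M 0 = (0, 0)"
  using q_ge_2 odd_M by (cases M) (auto simp: grid_path_def)

lemma grid_path_last: "grid_path q M (q * (q * M) - 1) = (M, 0)"
proof -
  have "q \<le> q * M"
    using M_pos by simp
  moreover have "2 * (q * M) \<le> q * (q * M)"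
    using q_ge_2 by (rule mult_le_mono1)
  ultimately have "\<not> q * (q * M) - 1 < M * q"
    using q_ge_2 unfolding mult.commute[of M q] by linarith
  moreover have "q * (q * M) - 1 - M * q = q * (q * M - M) - 1"
    by (simp add: diff_mult_distrib2 algebra_simps)
  moreover have "snake (q * M - M) (q * (q * M - M) - 1) = (q - 1, 0)"
    using snake_last[of "q * M - M" q] q_ge_2 even_q M_less by simp
  ultimately show ?thesis
    using q_ge_2 by (simp add: grid_path_def)
qed

lemma grid_path_adj:
  assumes "Suc p < q * (q * M)"
  shows "grid_adj (grid_path q M p) (grid_path q M (Suc p))"
proof -
  consider "Suc p < M * q" | "Suc p = M * q" | "M * q \<le> p"
    by linarith
  then show ?thesis
  proof cases
    case 1
    then show ?thesis
      using snake_grid_adj[of q p] q_ge_2 by (simp add: grid_path_def)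
  next
    case 2
    then have "p = M * q - 1"
      by simp
    then have "snake q p = (M - 1, q - 1)"
      using snake_last[of q M] q_ge_2 odd_M M_pos by simp
    with 2 M_pos show ?thesis
      by (auto simp: grid_path_def grid_adj_def)
  next
    case 3
    define x y where "x = snake (q * M - M) (p - M * q)" and "y = snake (q * M - M) (Suc (p - M * q))"
    have "0 < q * M - M"
      using M_less by simp
    then have "grid_adj x y"
      by (simp add: x_def y_def snake_grid_adj)
    moreover have "fst x < q"
      using snake_bounds(1)[OF row_phase_bound[of p]] assms 3 by (simp add: x_def)
    moreover have "fst y < q"
      using snake_bounds(1)[OF row_phase_bound[OF assms]] 3 by (simp add: y_def Suc_diff_le)
    ultimately have "grid_adj (M + snd x, q - 1 - fst x) (M + snd y, q - 1 - fst y)"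
      by (auto simp: grid_adj_def)
    with 3 show ?thesis
      by (simp add: grid_path_def x_def y_def Suc_diff_le)
  qed
qed

end

section \<open>From length \<open>n\<close> to length \<open>n + 2\<close>\<close>

definition word_extend :: "nat \<Rightarrow> (nat \<Rightarrow> nat) \<Rightarrow> nat \<Rightarrow> nat \<Rightarrow> nat \<Rightarrow> nat" where
  "word_extend n v a b =
     (\<lambda>k. if k < n then v k else if k = n then a else if k = Suc n then b else 0)"

lemma word_extend_in_words:
  "v \<in> words q n \<Longrightarrow> a < q \<Longrightarrow> b < q \<Longrightarrow> word_extend n v a b \<in> words q (Suc (Suc n))"
  by (auto simp: words_def word_extend_def)

lemma word_extend_eq_iff:
  assumes "u \<in> words q n" "v \<in> words q n"
  shows "word_extend n u a b = word_extend n v c d \<longleftrightarrow> u = v \<and> a = c \<and> b = d"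
proof
  assume eq: "word_extend n u a b = word_extend n v c d"
  have "u k = v k" for k
    using fun_cong[OF eq, of k] assms by (cases "k < n") (auto simp: word_extend_def words_def)
  moreover have "a = c" "b = d"
    using fun_cong[OF eq, of n] fun_cong[OF eq, of "Suc n"] by (simp_all add: word_extend_def)
  ultimately show "u = v \<and> a = c \<and> b = d"
    by auto
qed simp

lemma word_extend_in_diag:
  assumes "v \<in> words q n" "word_extend n v a b \<in> diag q (Suc (Suc n))"
  shows "v \<in> diag q n"
proof -
  obtain c where "c < q" and eq: "word_extend n v a b = const_word (Suc (Suc n)) c"
    using assms(2) by (auto simp: diag_def)
  have "v = const_word n c"
  proof
    fix k
    show "v k = const_word n c k"
      using fun_cong[OF eq, of k] assms(1)
      by (cases "k < n") (auto simp: word_extend_def const_word_def words_def)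
  qed
  with \<open>c < q\<close> show ?thesis
    by (simp add: diag_def)
qed

lemma lee_dist_word_extend:
  "lee_dist q (Suc (Suc n)) (word_extend n u a b) (word_extend n v c d) =
   lee_dist q n u v + lee_coord q a c + lee_coord q b d"
  by (simp add: lee_dist_eq_sum word_extend_def)

lemma word_add_const_word_extend:
  "word_add q (Suc (Suc n)) (word_extend n v a b) (const_word (Suc (Suc n)) r) =
   word_extend n (word_add q n v (const_word n r)) ((a + r) mod q) ((b + r) mod q)"
  by (simp add: word_add_def word_extend_def const_word_def fun_eq_iff)

locale gray_extension =
  fixes q n :: nat and G :: "nat \<Rightarrow> nat \<Rightarrow> nat"
  assumes q_ge_2: "2 \<le> q" and even_q: "even q" and odd_n: "odd n"
    and gray_G: "quasi_complementary_gray q n (\<lambda>_. 0) G"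
    and lee_dist_G_0: "lee_dist q n (G 0) (\<lambda>_. 0) = 1"
begin

abbreviation N :: nat where "N \<equiv> q ^ n - q"
abbreviation M :: nat where "M \<equiv> q ^ (n - 1) - 1"
abbreviation Z :: nat where "Z \<equiv> q ^ 2 - 1"

lemma n_pos: "0 < n"
  using odd_n by (cases n) auto

lemma q_pos: "0 < q"
  using q_ge_2 by simp

lemma Z_ge_3: "3 \<le> Z"
  using mult_le_mono[OF q_ge_2 q_ge_2] by (simp add: power2_eq_square)

lemma N_eq: "N = q * M"
  using n_pos by (rule power_minus_eq_mult)

lemma G_bij: "bij_betw G {0..<N} (words q n - diag q n)"
  using gray_G by (simp add: quasi_complementary_gray_def diag_coset_zero)

lemma G_mem: "L < N \<Longrightarrow> G L \<in> words q n - diag q n"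
  using G_bij by (auto dest: bij_betw_apply)

lemma G_step: "Suc L < N \<Longrightarrow> lee_dist q n (G L) (G (Suc L)) = 1"
  using gray_G by (simp add: quasi_complementary_gray_def)

lemma G_shift:
  "j < N \<Longrightarrow> G ((j + q ^ (n - 1) - 1) mod N) = word_add q n (G j) (const_word n 1)"
  using gray_G by (simp add: quasi_complementary_gray_def)

lemma G_M: "0 < N \<Longrightarrow> G M = word_add q n (G 0) (const_word n 1)"
proof -
  assume "0 < N"
  then have "0 < M"
    by (simp add: N_eq)
  then have "(0 + q ^ (n - 1) - 1) mod N = M"
    using q_ge_2 by (simp add: N_eq)
  with G_shift[OF \<open>0 < N\<close>] show ?thesis
    by simp
qed

lemma n_eq_1_or_N_pos: "n = 1 \<or> 0 < N"
proof (cases "n = 1")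
  case False
  with odd_n have "2 \<le> n"
    by (cases n) auto
  then have "q ^ 2 \<le> q ^ n"
    using q_ge_2 by (simp add: power_increasing)
  moreover have "q < q ^ 2"
    using q_ge_2 by (simp add: power2_eq_square)
  ultimately show ?thesis
    by simp
qed simp

lemma odd_M: "0 < N \<Longrightarrow> odd M"
proof -
  assume "0 < N"
  then have "n \<noteq> 1"
    by auto
  with odd_n have "even (q ^ (n - 1))"
    using even_q by (cases n) auto
  moreover have "0 < q ^ (n - 1)"
    using q_ge_2 by simp
  ultimately show ?thesis
    by simp
qed

lemma lee_dist_G_grid_adj:
  assumes "fst x < N" "fst y < N" "grid_adj x y"
  shows "lee_dist q n (G (fst x)) (G (fst y)) + lee_coord q (snd x) (snd y) = 1"
  using assms G_step[of "fst x"] G_step[of "fst y"] q_ge_2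
  by (auto simp: grid_adj_def lee_dist_commute)

text \<open>The \<open>q \<times> q\<close> grid without \<open>(0, 0) = snake q 0\<close>, walked backwards from \<open>(q - 1, 0)\<close>
  to \<open>(0, 1)\<close>.\<close>

definition corner :: "nat \<Rightarrow> nat \<times> nat" where
  "corner i = snake q (Z - i)"

lemma corner_bounds: "fst (corner i) < q" "snd (corner i) < q"
  using snake_bounds[of "Z - i" q q] q_ge_2 by (simp_all add: corner_def power2_eq_square)

lemma inj_on_corner: "inj_on corner {..<Z}"
proof (rule inj_onI)
  fix i i'
  assume "i \<in> {..<Z}" "i' \<in> {..<Z}" "corner i = corner i'"
  moreover from \<open>corner i = corner i'\<close> have "Z - i = Z - i'"
    unfolding corner_def by (rule injD[OF inj_snake[OF q_pos]])
  ultimately show "i = i'"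
    by simp
qed

lemma corner_ne_0:
  assumes "i < Z"
  shows "corner i \<noteq> (0, 0)"
proof
  assume "corner i = (0, 0)"
  then have "snake q (Z - i) = snake q 0"
    by (simp add: corner_def)
  then have "Z - i = 0"
    by (rule injD[OF inj_snake[OF q_pos]])
  with assms show False
    by simp
qed

lemma corner_adj: "Suc i < Z \<Longrightarrow> grid_adj (corner i) (corner (Suc i))"
proof -
  assume "Suc i < Z"
  then have "Z - i = Suc (Z - Suc i)"
    by simp
  then show ?thesis
    using snake_grid_adj[of q "Z - Suc i"] q_ge_2 by (simp add: corner_def grid_adj_commute)
qed

lemma corner_first: "corner 0 = (q - 1, 0)"
  using snake_last[of q q] q_ge_2 even_q by (simp add: corner_def power2_eq_square)

lemma corner_last: "corner (Z - 1) = (0, 1)"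
proof -
  have "Z - (Z - 1) = 1"
    using Z_ge_3 by simp
  then show ?thesis
    using snake_1[OF q_ge_2] by (simp add: corner_def)
qed

lemma odd_M_if_less:
  assumes "p < q * N"
  shows "odd M"
proof (rule odd_M)
  show "0 < N"
    using assms by (cases "N = 0") auto
qed

lemma grid_path_in_range:
  assumes "p < q * N"
  shows "fst (grid_path q M p) < N" "snd (grid_path q M p) < q"
  using grid_path_bounds[OF q_ge_2 even_q odd_M_if_less[OF assms]] assms by (simp_all add: N_eq)

definition transversal :: "nat \<Rightarrow> nat \<Rightarrow> nat" where
  "transversal i =
     (if i < Z then word_extend n (\<lambda>_. 0) (fst (corner i)) (snd (corner i))
      else word_extend n (G (fst (grid_path q M (i - Z)))) (snd (grid_path q M (i - Z))) 1)"

lemma transversal_corner: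
  "i < Z \<Longrightarrow> transversal i = word_extend n (\<lambda>_. 0) (fst (corner i)) (snd (corner i))"
  by (simp add: transversal_def)

lemma transversal_grid:
  "\<not> i < Z \<Longrightarrow>
   transversal i = word_extend n (G (fst (grid_path q M (i - Z)))) (snd (grid_path q M (i - Z))) 1"
  by (simp add: transversal_def)

lemma zero_in_words: "(\<lambda>_. 0) \<in> words q n"
  using q_pos by (simp add: words_def)

lemma transversal_mem:
  assumes "i < Z + q * N"
  shows "transversal i \<in> words q (Suc (Suc n)) - diag q (Suc (Suc n))"
proof (cases "i < Z")
  case True
  have "transversal i \<in> words q (Suc (Suc n))"
    using True corner_bounds zero_in_words by (simp add: transversal_corner word_extend_in_words)
  moreover have "transversal i \<notin> diag q (Suc (Suc n))"
  proof
    assume "transversal i \<in> diag q (Suc (Suc n))"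
    then obtain c where "transversal i = const_word (Suc (Suc n)) c"
      by (auto simp: diag_def)
    then have at: "transversal i k = const_word (Suc (Suc n)) c k" for k
      by simp
    from at[of 0] at[of n] at[of "Suc n"] have "corner i = (0, 0)"
      using True n_pos by (simp add: transversal_corner word_extend_def const_word_def prod_eq_iff)
    with corner_ne_0[OF True] show False ..
  qed
  ultimately show ?thesis
    by simp
next
  case False
  then have "i - Z < q * N"
    using assms by simp
  then have "G (fst (grid_path q M (i - Z))) \<in> words q n - diag q n"
    "snd (grid_path q M (i - Z)) < q"
    using G_mem grid_path_in_range by simp_all
  then show ?thesis
    using False q_ge_2
    by (auto simp: transversal_grid word_extend_in_words dest: word_extend_in_diag)
qed

lemma transversal_corner_grid_distinct:
  assumes "i < Z" "\<not> i' < Z" "i' < Z + q * N" "r < q"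
  shows "word_add q (Suc (Suc n)) (transversal i) (const_word (Suc (Suc n)) r) \<noteq>
         word_add q (Suc (Suc n)) (transversal i') (const_word (Suc (Suc n)) r')"
proof
  assume eq: "word_add q (Suc (Suc n)) (transversal i) (const_word (Suc (Suc n)) r) =
              word_add q (Suc (Suc n)) (transversal i') (const_word (Suc (Suc n)) r')"
  define L where "L = fst (grid_path q M (i' - Z))"
  have L: "G L \<in> words q n - diag q n"
    using assms G_mem grid_path_in_range unfolding L_def by simp
  have "word_add q n (G L) (const_word n r') = const_word n r"
  proof
    fix k
    show "word_add q n (G L) (const_word n r') k = const_word n r k"
      using fun_cong[OF eq, of k] assms
      by (cases "k < n") (simp_all add: transversal_corner transversal_grid L_def word_add_def
          word_extend_def const_word_def)
  qed
  then have "word_add q n (G L) (const_word n r') \<in> diag q n"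
    using assms by (simp add: diag_def)
  then show False
    using L by (auto dest: word_add_const_in_diag)
qed

lemma transversal_add_const_eq:
  assumes "i < Z + q * N" "i' < Z + q * N" "r < q"
    and eq: "word_add q (Suc (Suc n)) (transversal i) (const_word (Suc (Suc n)) r) = transversal i'"
  shows "r = 0"
proof -
  have at: "(transversal i k + r) mod q = transversal i' k" if "k < n + 2" for k
    using fun_cong[OF eq, of k] that by (simp add: word_add_def const_word_def)
  have eq0: "word_add q (Suc (Suc n)) (transversal i) (const_word (Suc (Suc n)) r) =
             word_add q (Suc (Suc n)) (transversal i') (const_word (Suc (Suc n)) 0)"
    using eq transversal_mem[OF assms(2)] by (simp add: word_add_const_0)
  consider "i < Z" "i' < Z" | "i < Z" "\<not> i' < Z" | "\<not> i < Z" "i' < Z" | "\<not> i < Z" "\<not> i' < Z"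
    by blast
  then show ?thesis
  proof cases
    case 1
    then show ?thesis
      using at[of 0] n_pos assms(3) by (simp add: transversal_corner word_extend_def)
  next
    case 2
    then show ?thesis
      using transversal_corner_grid_distinct assms eq0 by blast
  next
    case 3
    then show ?thesis
      using transversal_corner_grid_distinct[of i' i 0 r] assms q_pos eq0 by simp
  next
    case 4
    then have "(r + 1) mod q = (0 + 1) mod q"
      using at[of "Suc n"] q_ge_2 by (simp add: transversal_grid word_extend_def add.commute)
    then show ?thesis
      using assms(3) q_pos by (blast intro: mod_add_right_cancel)
  qed
qed

lemma inj_on_transversal: "inj_on transversal {..<Z + q * N}"
proof (rule inj_onI)
  fix i i'
  assume i: "i \<in> {..<Z + q * N}" and i': "i' \<in> {..<Z + q * N}"
    and eq: "transversal i = transversal i'"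
  consider "i < Z" "i' < Z" | "i < Z" "\<not> i' < Z" | "\<not> i < Z" "i' < Z" | "\<not> i < Z" "\<not> i' < Z"
    by blast
  then show "i = i'"
  proof cases
    case 1
    then have "corner i = corner i'"
      using eq zero_in_words by (simp add: transversal_corner word_extend_eq_iff prod_eq_iff)
    with 1 show ?thesis
      using inj_on_corner by (auto dest: inj_onD)
  next
    case 2
    then show ?thesis
      using transversal_corner_grid_distinct[of i i' 0 0] i i' eq q_pos by simp
  next
    case 3
    then show ?thesis
      using transversal_corner_grid_distinct[of i' i 0 0] i i' eq q_pos by simp
  next
    case 4
    define p p' where "p = i - Z" and "p' = i' - Z"
    have p: "p < q * N" "p' < q * N"
      using 4 i i' by (auto simp: p_def p'_def)
    then have "G (fst (grid_path q M p)) \<in> words q n" "G (fst (grid_path q M p')) \<in> words q n"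
      using G_mem grid_path_in_range by auto
    with eq 4 have "G (fst (grid_path q M p)) = G (fst (grid_path q M p'))"
      "snd (grid_path q M p) = snd (grid_path q M p')"
      by (simp_all add: transversal_grid word_extend_eq_iff p_def p'_def)
    then have "grid_path q M p = grid_path q M p'"
      using bij_betw_imp_inj_on[OF G_bij] grid_path_in_range[OF p(1)] grid_path_in_range[OF p(2)]
      by (auto simp: prod_eq_iff dest: inj_onD)
    then have "p = p'"
      using inj_on_grid_path[OF q_ge_2 even_q odd_M_if_less[OF p(1)]] p
      by (auto simp: N_eq dest: inj_onD)
    with 4 show ?thesis
      by (simp add: p_def p'_def)
  qed
qed

lemma transversal_step:
  assumes "Suc i < Z + q * N"
  shows "lee_dist q (Suc (Suc n)) (transversal i) (transversal (Suc i)) = 1"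
proof -
  consider "Suc i < Z" | "Suc i = Z" | "Z \<le> i"
    by linarith
  then show ?thesis
  proof cases
    case 1
    then show ?thesis
      using lee_coord_grid_adj[OF q_ge_2 corner_adj[OF 1]]
      by (simp add: transversal_corner lee_dist_word_extend)
  next
    case 2
    then have "0 < N"
      using assms by (cases "N = 0") auto
    have "i = Z - 1" "i < Z"
      using 2 by simp_all
    then have "transversal i = word_extend n (\<lambda>_. 0) 0 1"
      using corner_last by (simp add: transversal_corner)
    moreover have "transversal (Suc i) = word_extend n (G 0) 0 1"
      using 2 grid_path_0[OF q_ge_2 even_q odd_M[OF \<open>0 < N\<close>]] by (simp add: transversal_grid)
    ultimately show ?thesis
      using lee_dist_G_0 by (simp add: lee_dist_word_extend lee_dist_commute)
  next
    case 3
    define p where "p = i - Z"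
    have p: "Suc p < q * N" "Suc i - Z = Suc p"
      using assms 3 by (simp_all add: p_def)
    have "grid_adj (grid_path q M p) (grid_path q M (Suc p))"
      using grid_path_adj[OF q_ge_2 even_q odd_M_if_less[OF p(1)]] p by (simp add: N_eq)
    with p have "lee_dist q n (G (fst (grid_path q M p))) (G (fst (grid_path q M (Suc p)))) +
        lee_coord q (snd (grid_path q M p)) (snd (grid_path q M (Suc p))) = 1"
      using grid_path_in_range by (intro lee_dist_G_grid_adj) auto
    with 3 p show ?thesis
      by (simp add: transversal_grid lee_dist_word_extend p_def)
  qed
qed

lemma transversal_add_one:
  "word_add q (Suc (Suc n)) (transversal 0) (const_word (Suc (Suc n)) 1) =
   word_extend n (const_word n 1) 0 1"
  using Z_ge_3 corner_first q_ge_2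
  by (simp add: transversal_corner word_add_const_word_extend word_add_zero_left
      const_word_in_words)

lemma transversal_close:
  "lee_dist q (Suc (Suc n)) (transversal (Z + q * N - 1))
     (word_add q (Suc (Suc n)) (transversal 0) (const_word (Suc (Suc n)) 1)) = 1"
  using n_eq_1_or_N_pos
proof
  assume "n = 1"
  then have "N = 0"
    by simp
  then have "transversal (Z + q * N - 1) = word_extend n (\<lambda>_. 0) 0 1"
    using corner_last Z_ge_3 by (simp add: transversal_corner)
  moreover have "lee_dist q n (\<lambda>_. 0) (const_word n 1) = 1"
    using \<open>n = 1\<close> q_ge_2 by (simp add: lee_dist_eq_sum const_word_def lee_coord_commute)
  ultimately show ?thesis
    unfolding transversal_add_one by (simp add: lee_dist_word_extend)
next
  assume "0 < N"
  then have "0 < q * N"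
    using q_pos by simp
  then have "\<not> Z + q * N - 1 < Z" "Z + q * N - 1 - Z = q * N - 1"
    by linarith+
  then have "transversal (Z + q * N - 1) = word_extend n (word_add q n (G 0) (const_word n 1)) 0 1"
    using grid_path_last[OF q_ge_2 even_q odd_M[OF \<open>0 < N\<close>]] G_M[OF \<open>0 < N\<close>]
    by (simp add: transversal_grid N_eq)
  moreover have "lee_dist q n (word_add q n (G 0) (const_word n 1)) (const_word n 1) = 1"
    using lee_dist_word_add[of "G 0" q n "\<lambda>_. 0" "const_word n 1"] G_mem[OF \<open>0 < N\<close>]
      zero_in_words lee_dist_G_0 q_ge_2
    by (simp add: word_add_zero_left const_word_in_words)
  ultimately show ?thesis
    unfolding transversal_add_one by (simp add: lee_dist_word_extend)
qed

lemma transversal_length: "q ^ (Suc (Suc n) - 1) - 1 = Z + q * N"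
proof -
  have "q * N = q ^ (n + 1) - q ^ 2"
    by (simp add: diff_mult_distrib2 power2_eq_square)
  moreover have "q ^ 2 \<le> q ^ (n + 1)"
    using q_pos n_pos by (intro power_increasing) auto
  moreover have "1 \<le> q ^ 2"
    using q_pos by simp
  ultimately show ?thesis
    by simp
qed

lemma diag_transversal_transversal: "diag_transversal q (Suc (Suc n)) (Z + q * N) transversal"
proof
  show "Z + q * N = q ^ (Suc (Suc n) - 1) - 1"
    by (simp only: transversal_length)
  show "lee_dist q (Suc (Suc n)) (transversal (Z + q * N - 1))
      (word_add q (Suc (Suc n)) (transversal 0) (const_word (Suc (Suc n)) 1)) = 1"
    by (rule transversal_close)
qed (use q_pos transversal_mem inj_on_transversal transversal_add_const_eq transversal_step in auto)

lemma lee_dist_transversal_0: "lee_dist q (Suc (Suc n)) (transversal 0) (\<lambda>_. 0) = 1"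
proof -
  have "lee_dist q (Suc (Suc n)) (transversal 0) (word_extend n (\<lambda>_. 0) 0 0) = 1"
    using Z_ge_3 corner_first lee_coord_wrap[OF q_ge_2]
    by (simp add: transversal_corner lee_dist_word_extend)
  moreover have "word_extend n (\<lambda>_. 0) 0 0 = (\<lambda>_. 0)"
    by (simp add: word_extend_def fun_eq_iff)
  ultimately show ?thesis
    by simp
qed

lemma ex_extended_gray:
  "\<exists>G'. quasi_complementary_gray q (Suc (Suc n)) (\<lambda>_. 0) G' \<and>
        lee_dist q (Suc (Suc n)) (G' 0) (\<lambda>_. 0) = 1"
proof -
  interpret T: diag_transversal q "Suc (Suc n)" "Z + q * N" transversal
    by (rule diag_transversal_transversal)
  have "T.gray 0 = transversal 0"
    unfolding T.gray_def using transversal_mem[of 0] Z_ge_3 by (simp add: word_add_const_0)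
  then show ?thesis
    using T.quasi_complementary_gray lee_dist_transversal_0 by auto
qed

end

lemma quasi_complementary_gray_1: "quasi_complementary_gray q 1 (\<lambda>_. 0) G"
proof -
  have "words q 1 \<subseteq> diag q 1"
  proof
    fix v
    assume v: "v \<in> words q 1"
    then have "v = const_word 1 (v 0)"
      by (auto simp: words_def const_word_def)
    with v show "v \<in> diag q 1"
      by (auto simp: words_def diag_def)
  qed
  then show ?thesis
    by (simp add: quasi_complementary_gray_def diag_coset_zero bij_betw_def)
qed

lemma quasi_complementary_gray_exists:
  assumes "2 \<le> q" "even q" "odd n"
  shows "\<exists>G. quasi_complementary_gray q n (\<lambda>_. 0) G"
proof -
  have "\<exists>G. quasi_complementary_gray q (2 * k + 1) (\<lambda>_. 0) G \<and>
          lee_dist q (2 * k + 1) (G 0) (\<lambda>_. 0) = 1" for k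
  proof (induction k)
    case 0
    have "lee_dist q 1 (const_word 1 1) (\<lambda>_. 0) = 1"
      using assms(1) by (simp add: lee_dist_eq_sum const_word_def lee_coord_commute)
    then show ?case
      using quasi_complementary_gray_1 by auto
  next
    case (Suc k)
    then obtain G where "quasi_complementary_gray q (2 * k + 1) (\<lambda>_. 0) G"
      "lee_dist q (2 * k + 1) (G 0) (\<lambda>_. 0) = 1"
      by blast
    with assms interpret gray_extension q "2 * k + 1" G
      by unfold_locales auto
    from ex_extended_gray show ?case
      by simp
  qed
  moreover obtain k where "n = 2 * k + 1"
    using assms(3) oddE by blast
  ultimately show ?thesis
    by blast
qed

theorem theorem3:
  fixes n q :: nat and w :: "nat \<Rightarrow> nat"
  assumes "odd n" and "even q" and "q \<ge> 4" and "w \<in> words q n"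
  shows "\<exists>G :: nat \<Rightarrow> (nat \<Rightarrow> nat).
           bij_betw G {0..<q ^ n - q}
             (words q n - {word_add q n w (const_word n i) | i. i < q}) \<and>
           (\<forall>j. j + 1 < q ^ n - q \<longrightarrow> lee_dist q n (G j) (G (j + 1)) = 1) \<and>
           (\<forall>j < q ^ n - q.
              G ((j + q ^ (n - 1) - 1) mod (q ^ n - q)) = word_add q n (G j) (const_word n 1))"
proof -
  obtain G where "quasi_complementary_gray q n (\<lambda>_. 0) G"
    using quasi_complementary_gray_exists[of q n] assms by auto
  then have "quasi_complementary_gray q n w (word_add q n w \<circ> G)"
    using assms by (intro quasi_complementary_gray_translate) auto
  moreover have "{word_add q n w (const_word n i) | i. i < q} = diag_coset q n w"
    by (auto simp: diag_coset_def)
  ultimately show ?thesis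
    unfolding quasi_complementary_gray_def by auto
qed

end
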